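(* If a non-empty graph $T$ is a $\mathsf{TJ}_n$-graph for infinitely many integers $n$, then there exists an integer $k$ such that $T$ is a maximum $\mathsf{TJ}_k$-graph.
   Context: Graphs are finite, simple, undirected; non-empty means having at least one vertex. $\mathsf{TJ}_k(G)$ is the graph on the cliques of $G$ of size $k$ where $C, C'$ are adjacent iff $|C \setminus C'| = |C' \setminus C| = 1$. $T$ is a $\mathsf{TJ}_k$-graph if $T \cong \mathsf{TJ}_k(G)$ for some graph $G$, and a maximum $\mathsf{TJ}_k$-graph if $T \cong \mathsf{TJ}_k(G)$ for some $G$ with $\omega(G) = k$ ($\omega$ = maximum clique size). *)

theory Defs
  imports Main
begin

type_synonym 'a sgraph = "'a set \<times> 'a set set"

definition verts :: "'a sgraph \<Rightarrow> 'a set" where "verts G = fst G"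
definition edges :: "'a sgraph \<Rightarrow> 'a set set" where "edges G = snd G"

definition graph :: "'a sgraph \<Rightarrow> bool" where
  "graph G \<longleftrightarrow> finite (verts G) \<and> (\<forall>e\<in>edges G. card e = 2 \<and> e \<subseteq> verts G)"

definition adj :: "'a sgraph \<Rightarrow> 'a \<Rightarrow> 'a \<Rightarrow> bool" where
  "adj G x y \<longleftrightarrow> {x, y} \<in> edges G"

definition clique :: "'a sgraph \<Rightarrow> 'a set \<Rightarrow> bool" where
  "clique G C \<longleftrightarrow> C \<subseteq> verts G \<and> (\<forall>x\<in>C. \<forall>y\<in>C. x \<noteq> y \<longrightarrow> adj G x y)"

text \<open>Clique number omega(G): maximum size of a clique (the empty set is a clique).\<close>
definition clique_number :: "'a sgraph \<Rightarrow> nat" where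
  "clique_number G = Max {card C | C. clique G C}"

definition TJ :: "nat \<Rightarrow> 'a sgraph \<Rightarrow> 'a set sgraph" where
  "TJ k G = ({C. clique G C \<and> card C = k},
             {{C, C'} | C C'. clique G C \<and> card C = k \<and> clique G C' \<and> card C' = k \<and>
                              card (C - C') = 1 \<and> card (C' - C) = 1})"

definition graph_iso :: "'a sgraph \<Rightarrow> 'b sgraph \<Rightarrow> bool" where
  "graph_iso T H \<longleftrightarrow> (\<exists>f. bij_betw f (verts T) (verts H) \<and>
      (\<forall>x\<in>verts T. \<forall>y\<in>verts T. adj T x y \<longleftrightarrow> adj H (f x) (f y)))"

text \<open>Every finite graph is isomorphic to one on natural-number vertices, so the
  host graph G is taken with vertices in nat.\<close>
definition is_TJ :: "nat \<Rightarrow> 'a sgraph \<Rightarrow> bool" where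
  "is_TJ k T \<longleftrightarrow> (\<exists>G :: nat sgraph. graph G \<and> graph_iso T (TJ k G))"

definition is_max_TJ :: "nat \<Rightarrow> 'a sgraph \<Rightarrow> bool" where
  "is_max_TJ k T \<longleftrightarrow> (\<exists>G :: nat sgraph. graph G \<and> clique_number G = k \<and> graph_iso T (TJ k G))"

end

theory Submission
  imports Defs "HOL-Library.Infinite_Set"
begin

text \<open>Pick \<open>n \<ge> |V(T)|\<close> with \<open>T \<cong> TJ\<^sub>n(G)\<close>. A clique of \<open>G\<close> of size \<open>n + 1\<close> would
  contain \<open>n + 1\<close> distinct \<open>n\<close>-cliques, i.e. more vertices than \<open>TJ\<^sub>n(G)\<close> has;
  so \<open>\<omega>(G) \<le> n\<close>, and \<open>\<omega>(G) = n\<close> because \<open>TJ\<^sub>n(G)\<close> is non-empty.\<close>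

lemma verts_TJ [simp]: "verts (TJ k G) = {C. clique G C \<and> card C = k}"
  by (simp add: TJ_def verts_def)

lemma clique_subset: "clique G C \<Longrightarrow> D \<subseteq> C \<Longrightarrow> clique G D"
  unfolding clique_def by blast

lemma finite_clique: "graph G \<Longrightarrow> clique G C \<Longrightarrow> finite C"
  unfolding graph_def clique_def using finite_subset by blast

lemma finite_verts_TJ: "graph G \<Longrightarrow> finite (verts (TJ k G))"
  by (rule finite_subset[of _ "Pow (verts G)"]) (auto simp: clique_def graph_def)

lemma graph_iso_card_verts: "graph_iso T H \<Longrightarrow> card (verts T) = card (verts H)"
  unfolding graph_iso_def using bij_betw_same_card by blast

lemma card_verts_TJ_ge_if_clique:
  assumes "graph G" and "clique G K" and "card K = Suc k"
  shows "Suc k \<le> card (verts (TJ k G))"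
proof -
  have "finite K" using assms(1,2) by (rule finite_clique)
  have "(\<lambda>x. K - {x}) ` K \<subseteq> verts (TJ k G)"
    using assms(2,3) \<open>finite K\<close> by (auto intro: clique_subset)
  moreover have "inj_on (\<lambda>x. K - {x}) K"
    by (rule inj_onI) blast
  ultimately have "card K \<le> card (verts (TJ k G))"
    using card_mono[OF finite_verts_TJ[OF assms(1)]] card_image by metis
  with assms(3) show ?thesis by simp
qed

lemma clique_card_le_if_card_verts_TJ_le:
  assumes "graph G" and "card (verts (TJ k G)) \<le> k" and "clique G C"
  shows "card C \<le> k"
proof (rule ccontr)
  assume "\<not> card C \<le> k"
  moreover have "finite C" using assms(1,3) by (rule finite_clique)
  ultimately obtain K where "K \<subseteq> C" and "card K = Suc k"
    by (metis not_less_eq_eq obtain_subset_with_card_n)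
  then have "Suc k \<le> card (verts (TJ k G))"
    using assms(1,3) by (blast intro: card_verts_TJ_ge_if_clique clique_subset)
  with assms(2) show False by simp
qed

lemma clique_number_eq_if_card_verts_TJ_le:
  assumes "graph G" and "verts (TJ k G) \<noteq> {}" and "card (verts (TJ k G)) \<le> k"
  shows "clique_number G = k"
  unfolding clique_number_def
proof (rule Max_eqI)
  show "finite {card C |C. clique G C}"
    by (rule finite_subset[of _ "{..k}"])
      (auto dest: clique_card_le_if_card_verts_TJ_le[OF assms(1,3)])
  show "y \<le> k" if "y \<in> {card C |C. clique G C}" for y
    using that clique_card_le_if_card_verts_TJ_le[OF assms(1,3)] by blast
  show "k \<in> {card C |C. clique G C}"
    using assms(2) by auto
qed

theorem proposition4p13:
  fixes T :: "'a sgraph"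
  assumes "graph T"
    and "verts T \<noteq> {}"
    and "infinite {n. is_TJ n T}"
  shows "\<exists>k. is_max_TJ k T"
proof -
  obtain n where "is_TJ n T" and "card (verts T) \<le> n"
    using assms(3) by (auto simp: infinite_nat_iff_unbounded_le)
  then obtain G :: "nat sgraph" where G: "graph G" and iso: "graph_iso T (TJ n G)"
    unfolding is_TJ_def by blast
  have "finite (verts T)" using assms(1) by (simp add: graph_def)
  with assms(2) iso have "verts (TJ n G) \<noteq> {}"
    by (metis card_0_eq graph_iso_card_verts finite_verts_TJ[OF G])
  moreover have "card (verts (TJ n G)) \<le> n"
    using iso \<open>card (verts T) \<le> n\<close> by (simp add: graph_iso_card_verts)
  ultimately have "clique_number G = n"
    using G by (rule clique_number_eq_if_card_verts_TJ_le[rotated])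
  with G iso show ?thesis
    unfolding is_max_TJ_def by blast
qed

end
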